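(* Let $f:\mathbb{R}^d\to\mathbb{R}$ be SPB with parameters $\mathrm{R}_1,\mathrm{R}_2,m$, let $\sigma>0$ and $f_\sigma(x)=\mathbb{E}_{u\sim\mathcal{N}(0,I)}[f(x+\sigma u)]$. Then \[|f_\sigma(x)-f(x)|\le\mathcal{M}(x)\cdot\sigma\qquad\forall x\in\mathbb{R}^d,\] where $\mathcal{M}(x)=(2^{m-1}\mathrm{R}_1\|x\|^m+\mathrm{R}_2)\sqrt d+2^{m-1}\mathrm{R}_1\sigma^m(m+1+d)^{(m+1)/2}$.
   Context: $\mathcal{N}(0,I)$ is the $d$-dimensional standard Gaussian distribution; $\|\cdot\|$ the Euclidean norm. $f$ is SPB with parameters $\mathrm{R}_1\ge0$, $\mathrm{R}_2>0$, integer $m\ge0$ (with $\mathrm{R}_1=0$ iff $m=0$) if $f$ is locally Lipschitz and $\sup_{\zeta\in\partial_Cf(x)}\|\zeta\|\le\mathrm{R}_1\|x\|^m+\mathrm{R}_2$ for all $x$, where $\partial_C f$ is the Clarke subdifferential (convention $0^0=1$). *)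

theory Defs
  imports "HOL-Analysis.Analysis" "HOL-Probability.Probability"
begin

definition loc_lipschitz :: "('a::euclidean_space \<Rightarrow> real) \<Rightarrow> bool" where
  "loc_lipschitz f \<longleftrightarrow>
     (\<forall>x. \<exists>e>0. \<exists>L. \<forall>y\<in>ball x e. \<forall>z\<in>ball x e. \<bar>f y - f z\<bar> \<le> L * dist y z)"

definition clarke_dir_deriv :: "('a::euclidean_space \<Rightarrow> real) \<Rightarrow> 'a \<Rightarrow> 'a \<Rightarrow> ereal" where
  "clarke_dir_deriv f x v =
     Limsup (nhds x \<times>\<^sub>F at_right (0::real)) (\<lambda>(y, t). ereal ((f (y + t *\<^sub>R v) - f y) / t))"

definition clarke_subdiff :: "('a::euclidean_space \<Rightarrow> real) \<Rightarrow> 'a \<Rightarrow> 'a set" where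
  "clarke_subdiff f x = {\<zeta>. \<forall>v. ereal (\<zeta> \<bullet> v) \<le> clarke_dir_deriv f x v}"

text \<open>SPB with parameters R1, R2, m (with R1 = 0 iff m = 0).  Note 0^0 = 1 in Isabelle.\<close>
definition SPB :: "('a::euclidean_space \<Rightarrow> real) \<Rightarrow> real \<Rightarrow> real \<Rightarrow> nat \<Rightarrow> bool" where
  "SPB f R1 R2 m \<longleftrightarrow> R1 \<ge> 0 \<and> R2 > 0 \<and> (R1 = 0 \<longleftrightarrow> m = 0) \<and> loc_lipschitz f \<and>
     (\<forall>x. \<forall>\<zeta>\<in>clarke_subdiff f x. norm \<zeta> \<le> R1 * norm x ^ m + R2)"

definition std_gaussian :: "'a::euclidean_space measure" where
  "std_gaussian = density lborel
     (\<lambda>u. ennreal ((2 * pi) powr (- real DIM('a) / 2) * exp (- (norm u)\<^sup>2 / 2)))"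

definition gauss_smooth :: "('a::euclidean_space \<Rightarrow> real) \<Rightarrow> real \<Rightarrow> 'a \<Rightarrow> real" where
  "gauss_smooth f \<sigma> x = (\<integral>u. f (x + \<sigma> *\<^sub>R u) \<partial>std_gaussian)"

end

theory Submission
  imports Defs
begin

text \<open>
  The proof has two independent halves.

  Nonsmooth half: the Clarke directional derivative v \<mapsto> f\<degree>(z; v) of a locally
  Lipschitz f is finite and sublinear, so a supporting hyperplane to its epigraph at (w, f\<degree>(z; w))
  yields a Clarke subgradient \<zeta> with \<zeta> \<bullet> w = f\<degree>(z; w); hence f\<degree>(z; w) \<le> K |w| whenever
  all subgradients at z have norm at most K.  A Dini-derivative argument along the segment from
  x to y then gives the mean value inequality |f y - f x| \<le> K |y - x|.  For SPB functions
  K = R1 (|x| + |v|)^m + R2 on the segment from x to x + v, and convexity of t^m splits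
  (|x| + |v|)^m \<le> 2^(m-1) (|x|^m + |v|^m).

  Gaussian half: with v = \<sigma> u it remains to bound E|u| and E|u|^(m+1) for u ~ N(0, I).
  E|u|^2 = d gives E|u| \<le> sqrt d.  For the higher moment, ln y \<le> y - 1 gives
  r^k \<le> (k + d)^(k/2) e^(-k/2) e^(\<tau> r^2/2) with \<tau> = k/(k + d), and the moment generating
  function E e^(\<tau> |u|^2/2) = (1 - \<tau>)^(-d/2) = (1 + k/d)^(d/2) \<le> e^(k/2) cancels the factor
  e^(-k/2).
\<close>

section \<open>Clarke directional derivatives of locally Lipschitz functions\<close>

lemma loc_lipschitz_lipschitz_on_ball:
  assumes "loc_lipschitz f"
  obtains e L where "e > 0" "L-lipschitz_on (ball z e) f"
proof -
  obtain e L where e: "e > 0" and L: "\<forall>y\<in>ball z e. \<forall>w\<in>ball z e. \<bar>f y - f w\<bar> \<le> L * dist y w"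
    using assms unfolding loc_lipschitz_def by blast
  have "(max L 0)-lipschitz_on (ball z e) f"
  proof (rule lipschitz_onI)
    fix y w assume "y \<in> ball z e" "w \<in> ball z e"
    then have "\<bar>f y - f w\<bar> \<le> L * dist y w" using L by blast
    also have "\<dots> \<le> max L 0 * dist y w" by (intro mult_right_mono) auto
    finally show "dist (f y) (f w) \<le> max L 0 * dist y w" by (simp add: dist_real_def)
  qed simp
  with e show ?thesis by (rule that)
qed

lemma loc_lipschitz_continuous_on: "loc_lipschitz f \<Longrightarrow> continuous_on UNIV f"
  unfolding continuous_on_eq_continuous_at[OF open_UNIV]
  by (metis centre_in_ball continuous_on_interior interior_ball loc_lipschitz_lipschitz_on_ball
      lipschitz_on_continuous_on)

definition clarke_quotient :: "('a::euclidean_space \<Rightarrow> real) \<Rightarrow> 'a \<Rightarrow> 'a \<times> real \<Rightarrow> real" where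
  "clarke_quotient f v p = (f (fst p + snd p *\<^sub>R v) - f (fst p)) / snd p"

abbreviation clarke_filter :: "'a::euclidean_space \<Rightarrow> ('a \<times> real) filter" where
  "clarke_filter z \<equiv> nhds z \<times>\<^sub>F at_right 0"

lemma clarke_dir_deriv_eq_Limsup:
  "clarke_dir_deriv f z v = Limsup (clarke_filter z) (\<lambda>p. ereal (clarke_quotient f v p))"
  unfolding clarke_dir_deriv_def clarke_quotient_def by (simp add: case_prod_beta')

lemma clarke_filter_neq_bot: "clarke_filter z \<noteq> bot"
  by (simp add: prod_filter_eq_bot)

lemma eventually_clarke_filter_snd_pos: "\<forall>\<^sub>F p in clarke_filter z. snd p > 0"
  using filterlim_snd[of "at_right (0::real)" "nhds z"]
  unfolding filterlim_at by (auto elim: eventually_mono)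

lemma tendsto_clarke_filter_shift: "((\<lambda>p. fst p + snd p *\<^sub>R w) \<longlongrightarrow> z) (clarke_filter z)"
proof -
  have "((\<lambda>p. fst p + snd p *\<^sub>R w) \<longlongrightarrow> z + 0 *\<^sub>R w) (clarke_filter z)"
    using filterlim_snd[of "at_right (0::real)" "nhds z"]
    by (intro tendsto_intros filterlim_fst) (simp add: filterlim_at)
  then show ?thesis by simp
qed

lemma filterlim_clarke_filter_shift:
  "filterlim (\<lambda>p. (fst p + snd p *\<^sub>R w, snd p)) (clarke_filter z) (clarke_filter z)"
  by (rule filterlim_Pair[OF tendsto_clarke_filter_shift filterlim_snd])

lemma filterlim_clarke_filter_scale:
  assumes "c > 0"
  shows "filterlim (\<lambda>p. (fst p, c * snd p)) (clarke_filter z) (clarke_filter z)"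
proof (rule filterlim_Pair)
  have "((\<lambda>p. c * snd p) \<longlongrightarrow> c * 0) (clarke_filter z)"
    using filterlim_snd[of "at_right (0::real)" "nhds z"]
    by (intro tendsto_intros) (simp add: filterlim_at)
  moreover have "\<forall>\<^sub>F p in clarke_filter z. c * snd p \<in> {0<..} \<and> c * snd p \<noteq> 0"
    using eventually_clarke_filter_snd_pos by eventually_elim (use assms in auto)
  ultimately show "filterlim (\<lambda>p. c * snd p) (at_right 0) (clarke_filter z)"
    unfolding filterlim_at by simp
qed (rule filterlim_fst)

lemma clarke_dir_deriv_le_iff:
  "clarke_dir_deriv f z v \<le> ereal a \<longleftrightarrow>
     (\<forall>c>a. \<forall>\<^sub>F p in clarke_filter z. clarke_quotient f v p < c)"
proof
  assume le: "clarke_dir_deriv f z v \<le> ereal a"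
  show "\<forall>c>a. \<forall>\<^sub>F p in clarke_filter z. clarke_quotient f v p < c"
  proof (intro allI impI)
    fix c assume "a < c"
    with le have "Limsup (clarke_filter z) (\<lambda>p. ereal (clarke_quotient f v p)) < ereal c"
      unfolding clarke_dir_deriv_eq_Limsup by (simp add: le_less_trans)
    then show "\<forall>\<^sub>F p in clarke_filter z. clarke_quotient f v p < c"
      by (auto dest: Limsup_lessD)
  qed
next
  assume bound: "\<forall>c>a. \<forall>\<^sub>F p in clarke_filter z. clarke_quotient f v p < c"
  show "clarke_dir_deriv f z v \<le> ereal a"
    unfolding clarke_dir_deriv_eq_Limsup Limsup_le_iff
  proof (intro allI impI)
    fix y assume "ereal a < y"
    then show "\<forall>\<^sub>F p in clarke_filter z. ereal (clarke_quotient f v p) < y"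
      using bound by (cases y) auto
  qed
qed

lemma clarke_quotient_bounded:
  assumes "loc_lipschitz f"
  obtains K where "\<forall>\<^sub>F p in clarke_filter z. \<bar>clarke_quotient f v p\<bar> \<le> K"
proof -
  obtain e L where e: "e > 0" and L: "L-lipschitz_on (ball z e) f"
    using loc_lipschitz_lipschitz_on_ball[OF assms] .
  have "\<forall>\<^sub>F p in clarke_filter z. fst p + snd p *\<^sub>R v \<in> ball z e"
    using tendstoD[OF tendsto_clarke_filter_shift e] by (simp add: dist_commute)
  moreover have "\<forall>\<^sub>F p in clarke_filter z. fst p \<in> ball z e"
    using tendstoD[OF filterlim_fst e] by (simp add: dist_commute)
  ultimately have "\<forall>\<^sub>F p in clarke_filter z. \<bar>clarke_quotient f v p\<bar> \<le> L * norm v"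
    using eventually_clarke_filter_snd_pos
  proof eventually_elim
    case (elim p)
    then have "\<bar>f (fst p + snd p *\<^sub>R v) - f (fst p)\<bar> \<le> L * (snd p * norm v)"
      using lipschitz_onD[OF L] by (fastforce simp: dist_real_def dist_norm)
    with elim show ?case
      by (simp add: clarke_quotient_def abs_divide divide_le_eq mult_ac)
  qed
  then show ?thesis by (rule that)
qed

lemma clarke_dir_deriv_finite:
  assumes "loc_lipschitz f"
  shows "\<bar>clarke_dir_deriv f z v\<bar> \<noteq> \<infinity>"
proof -
  obtain K where K: "\<forall>\<^sub>F p in clarke_filter z. \<bar>clarke_quotient f v p\<bar> \<le> K"
    using clarke_quotient_bounded[OF assms] .
  have "Limsup (clarke_filter z) (\<lambda>p. ereal (clarke_quotient f v p)) \<le> ereal K"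
    by (rule Limsup_bounded) (use K in \<open>eventually_elim, auto\<close>)
  moreover have "ereal (- K) \<le> Liminf (clarke_filter z) (\<lambda>p. ereal (clarke_quotient f v p))"
    by (rule Liminf_bounded) (use K in \<open>eventually_elim, auto\<close>)
  moreover have "Liminf (clarke_filter z) (\<lambda>p. ereal (clarke_quotient f v p))
      \<le> Limsup (clarke_filter z) (\<lambda>p. ereal (clarke_quotient f v p))"
    by (rule Liminf_le_Limsup) (rule clarke_filter_neq_bot)
  ultimately show ?thesis
    unfolding clarke_dir_deriv_eq_Limsup by auto
qed

lemma clarke_dir_deriv_add:
  assumes "loc_lipschitz f"
  shows "clarke_dir_deriv f z (v + w) \<le> clarke_dir_deriv f z v + clarke_dir_deriv f z w"
proof -
  obtain a where a: "clarke_dir_deriv f z v = ereal a"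
    using clarke_dir_deriv_finite[OF assms, of z v] by (cases "clarke_dir_deriv f z v") auto
  obtain b where b: "clarke_dir_deriv f z w = ereal b"
    using clarke_dir_deriv_finite[OF assms, of z w] by (cases "clarke_dir_deriv f z w") auto
  have "clarke_dir_deriv f z (v + w) \<le> ereal (a + b)"
    unfolding clarke_dir_deriv_le_iff
  proof (intro allI impI)
    fix c assume "a + b < c"
    define d where "d = (c - a - b) / 2"
    have "d > 0" using \<open>a + b < c\<close> by (simp add: d_def)
    have "\<forall>\<^sub>F p in clarke_filter z. clarke_quotient f v p < a + d"
      using a \<open>d > 0\<close> clarke_dir_deriv_le_iff[of f z v a] by simp
    then have "\<forall>\<^sub>F p in clarke_filter z. clarke_quotient f v (fst p + snd p *\<^sub>R w, snd p) < a + d"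
      using filterlim_clarke_filter_shift unfolding filterlim_iff by blast
    moreover have "\<forall>\<^sub>F p in clarke_filter z. clarke_quotient f w p < b + d"
      using b \<open>d > 0\<close> clarke_dir_deriv_le_iff[of f z w b] by simp
    ultimately show "\<forall>\<^sub>F p in clarke_filter z. clarke_quotient f (v + w) p < c"
      using eventually_clarke_filter_snd_pos
    proof eventually_elim
      case (elim p)
      have "clarke_quotient f (v + w) p
          = clarke_quotient f v (fst p + snd p *\<^sub>R w, snd p) + clarke_quotient f w p"
        unfolding clarke_quotient_def
        by (simp add: scaleR_add_right add_divide_distrib[symmetric] add.assoc
            add.commute[of "snd p *\<^sub>R v"])
      with add_strict_mono[OF elim(1,2)] show ?case by (simp add: d_def)
    qed
  qed
  then show ?thesis using a b by simp
qed

lemma clarke_dir_deriv_scaleR: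
  assumes "loc_lipschitz f" and "c > 0"
  shows "clarke_dir_deriv f z (c *\<^sub>R v) \<le> ereal c * clarke_dir_deriv f z v"
proof -
  obtain a where a: "clarke_dir_deriv f z v = ereal a"
    using clarke_dir_deriv_finite[OF assms(1), of z v] by (cases "clarke_dir_deriv f z v") auto
  have "clarke_dir_deriv f z (c *\<^sub>R v) \<le> ereal (c * a)"
    unfolding clarke_dir_deriv_le_iff
  proof (intro allI impI)
    fix r assume "c * a < r"
    then have "a < r / c" using assms(2) by (simp add: field_simps)
    then have "\<forall>\<^sub>F p in clarke_filter z. clarke_quotient f v p < r / c"
      using a clarke_dir_deriv_le_iff[of f z v a] by simp
    then have "\<forall>\<^sub>F p in clarke_filter z. clarke_quotient f v (fst p, c * snd p) < r / c"
      using filterlim_clarke_filter_scale[OF assms(2)] unfolding filterlim_iff by blast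
    then show "\<forall>\<^sub>F p in clarke_filter z. clarke_quotient f (c *\<^sub>R v) p < r"
      using eventually_clarke_filter_snd_pos
    proof eventually_elim
      case (elim p)
      have "clarke_quotient f (c *\<^sub>R v) p = c * clarke_quotient f v (fst p, c * snd p)"
        using assms(2) elim by (simp add: clarke_quotient_def mult.commute)
      also have "\<dots> < c * (r / c)"
        using assms(2) elim by (intro mult_strict_left_mono) auto
      finally show ?case using assms(2) by simp
    qed
  qed
  then show ?thesis using a by simp
qed

lemma sublinear_imp_convex_on:
  fixes \<phi> :: "'a::real_vector \<Rightarrow> real"
  assumes add: "\<And>v w. \<phi> (v + w) \<le> \<phi> v + \<phi> w"
    and scale: "\<And>c v. c > 0 \<Longrightarrow> \<phi> (c *\<^sub>R v) \<le> c * \<phi> v"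
  shows "convex_on UNIV \<phi>"
proof (rule convex_onI)
  fix t :: real and x y :: 'a assume t: "0 < t" "t < 1"
  have "\<phi> ((1 - t) *\<^sub>R x + t *\<^sub>R y) \<le> \<phi> ((1 - t) *\<^sub>R x) + \<phi> (t *\<^sub>R y)" by (rule add)
  also have "\<dots> \<le> (1 - t) * \<phi> x + t * \<phi> y"
    using t by (intro add_mono scale) auto
  finally show "\<phi> ((1 - t) *\<^sub>R x + t *\<^sub>R y) \<le> (1 - t) * \<phi> x + t * \<phi> y" .
qed simp

lemma graph_point_notin_rel_interior_epigraph:
  fixes \<phi> :: "'a::euclidean_space \<Rightarrow> real"
  shows "(w, \<phi> w) \<notin> rel_interior (epigraph UNIV \<phi>)"
proof
  define p where "p = (w, \<phi> w)"
  assume "(w, \<phi> w) \<in> rel_interior (epigraph UNIV \<phi>)"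
  then obtain e where e: "e > 0" and sub: "ball p e \<inter> affine hull (epigraph UNIV \<phi>) \<subseteq> epigraph UNIV \<phi>"
    unfolding rel_interior_ball p_def by blast
  define q where "q = (w, \<phi> w - e / 2)"
  have "p \<in> epigraph UNIV \<phi>" "(w, \<phi> w + e / 2) \<in> epigraph UNIV \<phi>"
    using e by (simp_all add: epigraph_def p_def)
  then have "(2::real) *\<^sub>R p + (- 1) *\<^sub>R (w, \<phi> w + e / 2) \<in> affine hull (epigraph UNIV \<phi>)"
    by (intro mem_affine[OF affine_affine_hull] hull_inc) simp_all
  moreover have "(2::real) *\<^sub>R p + (- 1) *\<^sub>R (w, \<phi> w + e / 2) = q"
    by (simp add: q_def p_def algebra_simps scaleR_2)
  moreover have "q \<in> ball p e"
    using e by (simp add: p_def q_def dist_Pair_Pair dist_real_def)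
  ultimately have "q \<in> epigraph UNIV \<phi>" using sub by blast
  then show False using e by (simp add: q_def epigraph_def)
qed

lemma sublinear_exists_supporting_linear:
  fixes \<phi> :: "'a::euclidean_space \<Rightarrow> real"
  assumes add: "\<And>v w. \<phi> (v + w) \<le> \<phi> v + \<phi> w"
    and scale: "\<And>c v. c > 0 \<Longrightarrow> \<phi> (c *\<^sub>R v) \<le> c * \<phi> v"
  obtains \<zeta> where "\<And>v. \<zeta> \<bullet> v \<le> \<phi> v" and "\<zeta> \<bullet> w = \<phi> w"
proof -
  have "\<phi> 0 = 0"
    using add[of 0 0] scale[of "1/2" 0] by simp
  have convex: "convex (epigraph UNIV \<phi>)"
    by (intro convex_epigraphI sublinear_imp_convex_on add scale)
  have graph: "(w, \<phi> w) \<in> epigraph UNIV \<phi>"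
    by (simp add: epigraph_def)
  obtain a where a: "a \<noteq> 0"
    and supp: "\<And>y. y \<in> epigraph UNIV \<phi> \<Longrightarrow> a \<bullet> (w, \<phi> w) \<le> a \<bullet> y"
    by (rule supporting_hyperplane_rel_boundary[OF convex graph
          graph_point_notin_rel_interior_epigraph[where w = w]]) (rule that)
  have key: "fst a \<bullet> w + snd a * \<phi> w \<le> fst a \<bullet> v + snd a * s" if "\<phi> v \<le> s" for v s
    using supp[of "(v, s)"] that by (simp add: epigraph_def inner_prod_def)
  txt \<open>The supporting hyperplane is not vertical, since \<phi> is finite everywhere.\<close>
  have "snd a \<noteq> 0"
  proof
    assume "snd a = 0"
    then have "fst a \<bullet> w \<le> fst a \<bullet> (w - fst a)"
      using key[of "w - fst a" "\<phi> (w - fst a)"] by simp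
    then have "fst a \<bullet> fst a \<le> 0" by (simp add: inner_diff_right)
    then have "fst a = 0" using inner_gt_zero_iff[of "fst a"] by linarith
    with \<open>snd a = 0\<close> a show False by (simp add: prod_eq_iff)
  qed
  moreover have "snd a \<ge> 0"
    using key[of w "\<phi> w + 1"] by (simp add: distrib_left)
  ultimately have pos: "snd a > 0" by simp
  define \<zeta> where "\<zeta> = - (1 / snd a) *\<^sub>R fst a"
  have tangent: "\<phi> w - \<zeta> \<bullet> w \<le> \<phi> v - \<zeta> \<bullet> v" for v
    using divide_right_mono[OF key[of v "\<phi> v", OF order_refl], of "snd a"] pos
    by (simp add: \<zeta>_def add_divide_distrib)
  have below: "\<zeta> \<bullet> v \<le> \<phi> v" for v
  proof (rule ccontr)
    assume "\<not> \<zeta> \<bullet> v \<le> \<phi> v"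
    define l where "l = (\<bar>\<phi> w - \<zeta> \<bullet> w\<bar> + 1) / (\<zeta> \<bullet> v - \<phi> v)"
    have l: "l > 0" "l * (\<zeta> \<bullet> v - \<phi> v) = \<bar>\<phi> w - \<zeta> \<bullet> w\<bar> + 1"
      using \<open>\<not> \<zeta> \<bullet> v \<le> \<phi> v\<close> by (simp_all add: l_def)
    have "\<phi> w - \<zeta> \<bullet> w \<le> \<phi> (l *\<^sub>R v) - \<zeta> \<bullet> (l *\<^sub>R v)"
      by (rule tangent)
    also have "\<dots> \<le> - (l * (\<zeta> \<bullet> v - \<phi> v))"
      using scale[OF l(1), of v] by (simp add: algebra_simps)
    finally show False using l(2) by linarith
  qed
  moreover have "\<zeta> \<bullet> w = \<phi> w"
    using tangent[of 0] below[of w] \<open>\<phi> 0 = 0\<close> by simp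
  ultimately show ?thesis by (rule that)
qed

lemma clarke_dir_deriv_le_norm:
  assumes "loc_lipschitz f" and "\<And>\<zeta>. \<zeta> \<in> clarke_subdiff f z \<Longrightarrow> norm \<zeta> \<le> K"
  shows "clarke_dir_deriv f z w \<le> ereal (K * norm w)"
proof -
  define \<phi> where "\<phi> v = real_of_ereal (clarke_dir_deriv f z v)" for v
  have \<phi>: "clarke_dir_deriv f z v = ereal (\<phi> v)" for v
    using clarke_dir_deriv_finite[OF assms(1)] by (simp add: \<phi>_def ereal_real')
  have add: "\<phi> (v + v') \<le> \<phi> v + \<phi> v'" for v v'
    using clarke_dir_deriv_add[OF assms(1), of z v v'] by (simp add: \<phi>)
  have scale: "\<phi> (c *\<^sub>R v) \<le> c * \<phi> v" if "c > 0" for c v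
    using clarke_dir_deriv_scaleR[OF assms(1) that, of z v] by (simp add: \<phi>)
  obtain \<zeta> where below: "\<And>v. \<zeta> \<bullet> v \<le> \<phi> v" and at_w: "\<zeta> \<bullet> w = \<phi> w"
    using sublinear_exists_supporting_linear[OF add scale, where w = w] by blast
  have "\<zeta> \<in> clarke_subdiff f z"
    using below by (simp add: clarke_subdiff_def \<phi>)
  then have "norm \<zeta> * norm w \<le> K * norm w"
    using assms(2) by (simp add: mult_right_mono)
  moreover have "\<phi> w \<le> norm \<zeta> * norm w"
    using at_w norm_cauchy_schwarz[of \<zeta> w] by simp
  ultimately show ?thesis by (simp add: \<phi>)
qed

section \<open>A mean value inequality for the Clarke subdifferential\<close>

lemma increment_le_of_upper_right_dini:
  fixes h :: "real \<Rightarrow> real"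
  assumes cont: "continuous_on {0..1} h"
    and dini: "\<And>t c. 0 \<le> t \<Longrightarrow> t < 1 \<Longrightarrow> M < c \<Longrightarrow> \<forall>\<^sub>F s in at_right 0. h (t + s) - h t < c * s"
  shows "h 1 - h 0 \<le> M"
proof (rule field_le_epsilon)
  fix \<epsilon> :: real assume \<epsilon>: "\<epsilon> > 0"
  txt \<open>The last point of [0, 1] where h has not outgrown slope M + \<epsilon> must be 1, since the
    Dini bound lets h stay below that slope a little further.\<close>
  define g where "g t = h t - h 0 - (M + \<epsilon>) * t" for t
  define A where "A = {0..1} \<inter> g -` {..0}"
  have "closed A"
    unfolding A_def g_def by (intro continuous_closed_preimage continuous_intros cont)
  moreover have "0 \<in> A" and bdd: "bdd_above A"
    by (auto simp: A_def g_def intro: bdd_aboveI[of _ 1])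
  ultimately have "Sup A \<in> A"
    using closed_contains_Sup by blast
  then have sup: "0 \<le> Sup A" "Sup A \<le> 1" "g (Sup A) \<le> 0"
    by (auto simp: A_def)
  have "Sup A = 1"
  proof (rule ccontr)
    assume "Sup A \<noteq> 1"
    with sup have "Sup A < 1" by simp
    with dini[OF sup(1) this, of "M + \<epsilon>"] \<epsilon> obtain d where d: "d > 0"
      and step: "\<And>s. 0 < s \<Longrightarrow> s < d \<Longrightarrow> h (Sup A + s) - h (Sup A) < (M + \<epsilon>) * s"
      unfolding eventually_at_right_field by auto
    define s where "s = min (d / 2) (1 - Sup A)"
    have s: "0 < s" "s < d" "Sup A + s \<le> 1"
      using d \<open>Sup A < 1\<close> by (auto simp: s_def)
    then have "g (Sup A + s) < g (Sup A)"
      using step[of s] by (simp add: g_def algebra_simps)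
    then have "Sup A + s \<in> A"
      using sup s by (simp add: A_def)
    then have "Sup A + s \<le> Sup A"
      by (rule cSup_upper[OF _ bdd])
    then show False using s by simp
  qed
  with sup show "h 1 - h 0 \<le> M + \<epsilon>"
    by (simp add: g_def)
qed

lemma clarke_dir_deriv_lessD:
  assumes "clarke_dir_deriv f z v < ereal c"
  shows "\<forall>\<^sub>F s in at_right 0. f (z + s *\<^sub>R v) - f z < c * s"
proof -
  have "\<forall>\<^sub>F p in clarke_filter z. ereal (clarke_quotient f v p) < ereal c"
    using assms unfolding clarke_dir_deriv_eq_Limsup by (rule Limsup_lessD)
  then obtain P Q where "eventually P (nhds z)" and Q: "eventually Q (at_right 0)"
    and PQ: "\<And>y s. P y \<Longrightarrow> Q s \<Longrightarrow> clarke_quotient f v (y, s) < c"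
    unfolding eventually_prod_filter by auto
  then have "P z" by (simp add: eventually_nhds_x_imp_x)
  from Q eventually_at_right_less show ?thesis
  proof eventually_elim
    case (elim s)
    then show ?case
      using PQ[OF \<open>P z\<close>, of s] by (simp add: clarke_quotient_def pos_divide_less_eq)
  qed
qed

lemma loc_lipschitz_increment_le:
  assumes "loc_lipschitz f"
    and bound: "\<And>t. 0 \<le> t \<Longrightarrow> t \<le> 1 \<Longrightarrow> clarke_dir_deriv f (x + t *\<^sub>R v) v \<le> ereal M"
  shows "f (x + v) - f x \<le> M"
proof -
  define h where "h t = f (x + t *\<^sub>R v)" for t
  have "continuous_on {0..1} h"
    unfolding h_def
    by (rule continuous_on_compose2[OF loc_lipschitz_continuous_on[OF assms(1)]])
      (auto intro!: continuous_intros)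
  then have "h 1 - h 0 \<le> M"
  proof (rule increment_le_of_upper_right_dini)
    fix t c :: real assume "0 \<le> t" "t < 1" "M < c"
    then have "clarke_dir_deriv f (x + t *\<^sub>R v) v < ereal c"
      using bound[of t] by (simp add: le_less_trans)
    then have "\<forall>\<^sub>F s in at_right 0. f ((x + t *\<^sub>R v) + s *\<^sub>R v) - f (x + t *\<^sub>R v) < c * s"
      by (rule clarke_dir_deriv_lessD)
    then show "\<forall>\<^sub>F s in at_right 0. h (t + s) - h t < c * s"
      by (simp add: h_def scaleR_add_left add.assoc)
  qed
  then show ?thesis by (simp add: h_def)
qed

lemma clarke_mean_value_bound:
  assumes "loc_lipschitz f"
    and bound: "\<And>z \<zeta>. z \<in> closed_segment x y \<Longrightarrow> \<zeta> \<in> clarke_subdiff f z \<Longrightarrow> norm \<zeta> \<le> K"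
  shows "\<bar>f y - f x\<bar> \<le> K * dist x y"
proof -
  have one_sided: "f b - f a \<le> K * dist a b" if "closed_segment a b = closed_segment x y" for a b
  proof -
    have "f (a + (b - a)) - f a \<le> K * norm (b - a)"
    proof (rule loc_lipschitz_increment_le[OF assms(1)])
      fix t :: real assume "0 \<le> t" "t \<le> 1"
      then have "a + t *\<^sub>R (b - a) \<in> closed_segment x y"
        unfolding that[symmetric] in_segment by (auto intro!: exI[of _ t] simp: algebra_simps)
      then show "clarke_dir_deriv f (a + t *\<^sub>R (b - a)) (b - a) \<le> ereal (K * norm (b - a))"
        using bound by (intro clarke_dir_deriv_le_norm[OF assms(1)]) blast
    qed
    then show ?thesis by (simp add: dist_norm norm_minus_commute)
  qed
  show ?thesis
    using one_sided[of x y] one_sided[of y x]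
    by (simp add: closed_segment_commute dist_commute abs_le_iff)
qed

lemma convex_on_power_nonneg: "convex_on {0::real..} (\<lambda>x. x ^ n)"
proof (rule f''_ge0_imp_convex)
  show "((\<lambda>x. x ^ n) has_real_derivative of_nat n * x ^ (n - 1)) (at x)" for x :: real
    by (rule derivative_eq_intros | simp)+
  show "((\<lambda>x. of_nat n * x ^ (n - 1)) has_real_derivative of_nat n * of_nat (n - 1) * x ^ (n - 2))
      (at x)" for x :: real
    by (rule derivative_eq_intros | simp add: eval_nat_numeral)+
qed auto

lemma power_add_le_powr:
  fixes a b :: real
  assumes "a \<ge> 0" "b \<ge> 0"
  shows "(a + b) ^ m \<le> 2 powr (real m - 1) * (a ^ m + b ^ m)"
proof -
  have "((1 - 1 / 2) *\<^sub>R a + (1 / 2) *\<^sub>R b) ^ m \<le> (1 - 1 / 2) * a ^ m + (1 / 2) * b ^ m"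
    using assms by (intro convex_onD[OF convex_on_power_nonneg]) auto
  then have "((a + b) / 2) ^ m \<le> (a ^ m + b ^ m) / 2"
    by (simp add: add_divide_distrib)
  then have "(a + b) ^ m \<le> 2 ^ m * ((a ^ m + b ^ m) / 2)"
    by (simp add: power_divide pos_divide_le_eq mult.commute)
  also have "2 ^ m * ((a ^ m + b ^ m) / 2) = 2 powr (real m - 1) * (a ^ m + b ^ m)"
    by (simp add: powr_diff powr_realpow)
  finally show ?thesis .
qed

lemma SPB_increment_bound:
  assumes "SPB f R1 R2 m"
  shows "\<bar>f (x + v) - f x\<bar>
    \<le> (2 powr (real m - 1) * R1 * norm x ^ m + R2) * norm v + 2 powr (real m - 1) * R1 * norm v ^ (m + 1)"
proof -
  have R1: "R1 \<ge> 0" and lip: "loc_lipschitz f"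
    and subgrad: "\<And>z \<zeta>. \<zeta> \<in> clarke_subdiff f z \<Longrightarrow> norm \<zeta> \<le> R1 * norm z ^ m + R2"
    using assms by (auto simp: SPB_def)
  have "\<bar>f (x + v) - f x\<bar> \<le> (R1 * (norm x + norm v) ^ m + R2) * dist x (x + v)"
  proof (rule clarke_mean_value_bound[OF lip])
    fix z \<zeta> assume z: "z \<in> closed_segment x (x + v)" and "\<zeta> \<in> clarke_subdiff f z"
    have "norm z \<le> norm x + norm (z - x)"
      by (metis add.commute diff_add_cancel norm_triangle_ineq)
    also have "norm (z - x) \<le> norm v"
      using segment_bound1[OF z] by simp
    finally have "R1 * norm z ^ m \<le> R1 * (norm x + norm v) ^ m"
      using R1 by (intro mult_left_mono power_mono) auto
    with subgrad[OF \<open>\<zeta> \<in> clarke_subdiff f z\<close>]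
    show "norm \<zeta> \<le> R1 * (norm x + norm v) ^ m + R2" by simp
  qed
  also have "dist x (x + v) = norm v"
    by (simp add: dist_norm)
  also have "(R1 * (norm x + norm v) ^ m + R2) * norm v
      \<le> (2 powr (real m - 1) * R1 * (norm x ^ m + norm v ^ m) + R2) * norm v"
    using mult_left_mono[OF power_add_le_powr[of "norm x" "norm v" m] R1]
    by (intro mult_right_mono add_right_mono) (simp_all add: mult_ac)
  also have "\<dots> = (2 powr (real m - 1) * R1 * norm x ^ m + R2) * norm v
      + 2 powr (real m - 1) * R1 * norm v ^ (m + 1)"
    by (simp add: algebra_simps)
  finally show ?thesis .
qed

section \<open>Moments of the standard Gaussian\<close>

lemma power2_norm_eq_sum_Basis: "(norm u)\<^sup>2 = (\<Sum>b\<in>Basis. (u \<bullet> b)\<^sup>2)"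
  for u :: "'a::euclidean_space"
  unfolding power2_norm_eq_inner by (subst euclidean_inner) (simp add: power2_eq_square)

lemma std_gaussian_density_eq_prod:
  "(2 * pi) powr (- real DIM('a) / 2) * exp (- (norm u)\<^sup>2 / 2)
     = (\<Prod>b\<in>Basis. std_normal_density (u \<bullet> b))"
  for u :: "'a::euclidean_space"
proof -
  have "(\<Prod>b\<in>Basis. std_normal_density (u \<bullet> b))
      = (1 / sqrt (2 * pi)) ^ DIM('a) * exp (\<Sum>b\<in>Basis. - (u \<bullet> b)\<^sup>2 / 2)"
    by (simp add: std_normal_density_def prod_dividef exp_sum power_one_over)
  also have "(1 / sqrt (2 * pi)) ^ DIM('a) = (2 * pi) powr (- real DIM('a) / 2)"
    by (simp add: powr_half_sqrt[symmetric] powr_minus_divide[symmetric] powr_realpow[symmetric] powr_powr)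
  also have "(\<Sum>b\<in>Basis. - (u \<bullet> b)\<^sup>2 / 2) = - (norm u)\<^sup>2 / 2"
    by (simp add: power2_norm_eq_sum_Basis sum_negf sum_divide_distrib)
  finally show ?thesis by simp
qed

lemma sets_std_gaussian [measurable_cong]: "sets std_gaussian = sets borel"
  by (simp add: std_gaussian_def)

lemma nn_integral_std_gaussian_prod:
  fixes g :: "'a::euclidean_space \<Rightarrow> real \<Rightarrow> ennreal"
  assumes [measurable]: "\<And>b. b \<in> Basis \<Longrightarrow> g b \<in> borel_measurable borel"
  shows "(\<integral>\<^sup>+u. (\<Prod>b\<in>Basis. g b (u \<bullet> b)) \<partial>std_gaussian)
       = (\<Prod>b\<in>Basis. \<integral>\<^sup>+x. std_normal_density x * g b x \<partial>lborel)"
proof -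
  have "(\<integral>\<^sup>+u. (\<Prod>b\<in>Basis. g b (u \<bullet> b)) \<partial>std_gaussian)
      = (\<integral>\<^sup>+u. ennreal (\<Prod>b\<in>Basis. std_normal_density (u \<bullet> b)) * (\<Prod>b\<in>Basis. g b (u \<bullet> b)) \<partial>lborel)"
    unfolding std_gaussian_def std_gaussian_density_eq_prod
    by (rule nn_integral_density) (simp_all add: measurable_lborel2)
  also have "\<dots> = (\<integral>\<^sup>+u. (\<Prod>b\<in>Basis. std_normal_density (u \<bullet> b) * g b (u \<bullet> b)) \<partial>lborel)"
    by (simp add: prod_ennreal[symmetric] prod.distrib)
  also have "\<dots> = (\<Prod>b\<in>Basis. \<integral>\<^sup>+x. std_normal_density x * g b x \<partial>lborel)"
    by (rule nn_integral_lborel_prod[where f = "\<lambda>b x. std_normal_density x * g b x"]) simp_all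
  finally show ?thesis .
qed

lemma nn_integral_std_normal_density_mult_exp:
  assumes "\<tau> < 1"
  shows "(\<integral>\<^sup>+x. std_normal_density x * ennreal (exp (\<tau> * x\<^sup>2 / 2)) \<partial>lborel)
       = ennreal ((1 - \<tau>) powr (- 1 / 2))"
proof -
  define s where "s = 1 / sqrt (1 - \<tau>)"
  have s: "s > 0" "s\<^sup>2 = 1 / (1 - \<tau>)"
    using assms by (simp_all add: s_def power_divide)
  have "std_normal_density x * exp (\<tau> * x\<^sup>2 / 2) = s * normal_density 0 s x" for x
  proof -
    have "- x\<^sup>2 / 2 + \<tau> * x\<^sup>2 / 2 = - x\<^sup>2 / (2 * s\<^sup>2)"
      unfolding s(2) using assms by (simp add: field_simps)
    moreover have "sqrt (2 * pi * s\<^sup>2) = sqrt (2 * pi) * s"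
      using s(1) by (simp add: real_sqrt_mult)
    ultimately show ?thesis
      using s(1) by (simp add: normal_density_def std_normal_density_def exp_add[symmetric])
  qed
  then have "(\<integral>\<^sup>+x. std_normal_density x * ennreal (exp (\<tau> * x\<^sup>2 / 2)) \<partial>lborel)
      = (\<integral>\<^sup>+x. ennreal s * ennreal (normal_density 0 s x) \<partial>lborel)"
    using s by (simp add: ennreal_mult[symmetric])
  also have "\<dots> = ennreal s"
    using s by (simp add: nn_integral_cmult nn_integral_eq_integral)
  finally show ?thesis
    using assms by (simp add: s_def powr_minus_divide powr_half_sqrt)
qed

lemma nn_integral_std_normal_density_mult_square:
  "(\<integral>\<^sup>+x. std_normal_density x * ennreal (x\<^sup>2) \<partial>lborel) = 1"
  using integral_std_normal_moment_even[of 1] integrable_std_normal_moment[of 2]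
  by (simp add: ennreal_mult[symmetric] nn_integral_eq_integral)

lemma nn_integral_std_normal_density: "(\<integral>\<^sup>+x. std_normal_density x \<partial>lborel) = 1"
  by (simp add: nn_integral_eq_integral)

lemma nn_integral_std_gaussian_exp_norm_sq:
  assumes "\<tau> < 1"
  shows "(\<integral>\<^sup>+u. ennreal (exp (\<tau> * (norm u)\<^sup>2 / 2)) \<partial>(std_gaussian :: 'a::euclidean_space measure))
       = ennreal ((1 - \<tau>) powr (- real DIM('a) / 2))"
proof -
  have "ennreal (exp (\<tau> * (norm u)\<^sup>2 / 2)) = (\<Prod>b\<in>Basis. ennreal (exp (\<tau> * (u \<bullet> b)\<^sup>2 / 2)))"
    for u :: 'a
    by (simp add: prod_ennreal exp_sum[symmetric] power2_norm_eq_sum_Basis sum_distrib_left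
        sum_divide_distrib)
  then have "(\<integral>\<^sup>+u. ennreal (exp (\<tau> * (norm u)\<^sup>2 / 2)) \<partial>(std_gaussian :: 'a measure))
      = (\<Prod>b\<in>(Basis :: 'a set). \<integral>\<^sup>+x. std_normal_density x * ennreal (exp (\<tau> * x\<^sup>2 / 2)) \<partial>lborel)"
    by (simp only:) (rule nn_integral_std_gaussian_prod, simp)
  also have "\<dots> = ennreal ((1 - \<tau>) powr (- 1 / 2)) ^ DIM('a)"
    using assms by (simp add: nn_integral_std_normal_density_mult_exp)
  finally show ?thesis
    using assms by (simp add: ennreal_power powr_realpow[symmetric] powr_powr)
qed

lemma prob_space_std_gaussian: "prob_space (std_gaussian :: 'a::euclidean_space measure)"
proof
  show "emeasure (std_gaussian :: 'a measure) (space std_gaussian) = 1"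
    using nn_integral_std_gaussian_exp_norm_sq[of 0, where 'a='a] by simp
qed

lemma nn_integral_std_gaussian_norm_sq:
  "(\<integral>\<^sup>+u. ennreal ((norm u)\<^sup>2) \<partial>(std_gaussian :: 'a::euclidean_space measure)) = real DIM('a)"
proof -
  have coordinate: "(\<integral>\<^sup>+u. ennreal ((u \<bullet> c)\<^sup>2) \<partial>(std_gaussian :: 'a measure)) = 1"
    if c: "c \<in> Basis" for c
  proof -
    have "ennreal ((u \<bullet> c)\<^sup>2) = (\<Prod>b\<in>Basis. if b = c then ennreal ((u \<bullet> b)\<^sup>2) else 1)" for u :: 'a
      using c by (simp add: prod.delta')
    then have "(\<integral>\<^sup>+u. ennreal ((u \<bullet> c)\<^sup>2) \<partial>(std_gaussian :: 'a measure))
        = (\<Prod>b\<in>(Basis :: 'a set). \<integral>\<^sup>+x. std_normal_density x * (if b = c then ennreal (x\<^sup>2) else 1) \<partial>lborel)"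
      by (simp only:) (rule nn_integral_std_gaussian_prod, simp)
    also have "\<dots> = 1"
    proof (rule prod.neutral, rule ballI)
      fix b :: 'a
      show "(\<integral>\<^sup>+x. std_normal_density x * (if b = c then ennreal (x\<^sup>2) else 1) \<partial>lborel) = 1"
        by (cases "b = c")
          (simp_all add: nn_integral_std_normal_density_mult_square nn_integral_std_normal_density)
    qed
    finally show ?thesis .
  qed
  have "(\<integral>\<^sup>+u. ennreal ((norm u)\<^sup>2) \<partial>(std_gaussian :: 'a measure))
      = (\<Sum>c\<in>Basis. \<integral>\<^sup>+u. ennreal ((u \<bullet> c)\<^sup>2) \<partial>(std_gaussian :: 'a measure))"
    by (simp add: power2_norm_eq_sum_Basis nn_integral_sum sum_ennreal[symmetric] del: sum_ennreal)
  also have "\<dots> = real DIM('a)"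
    by (simp add: coordinate ennreal_of_nat_eq_real_of_nat)
  finally show ?thesis .
qed

lemma power_le_exp_square:
  fixes r n :: real
  assumes r: "r \<ge> 0" and n: "n > 0"
  shows "r ^ k \<le> (k + n) powr (k / 2) * exp (- k / 2) * exp (k / (k + n) * r\<^sup>2 / 2)"
proof (cases "r = 0")
  case True
  then show ?thesis
    using n by (cases k) simp_all
next
  case False
  with r have r: "r > 0" by simp
  have kn: "k + n > 0" using n by simp
  have "ln (r\<^sup>2 / (k + n)) \<le> r\<^sup>2 / (k + n) - 1"
    using r kn by (intro ln_le_minus_one) simp
  then have "k / 2 * ln (r\<^sup>2 / (k + n)) \<le> k / 2 * (r\<^sup>2 / (k + n) - 1)"
    by (intro mult_left_mono) simp_all
  then have "k * ln r \<le> k / 2 * ln (k + n) - k / 2 + k / (k + n) * r\<^sup>2 / 2"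
    using r kn by (simp add: ln_div ln_realpow field_simps)
  then have "exp (k * ln r) \<le> exp (k / 2 * ln (k + n) + - k / 2 + k / (k + n) * r\<^sup>2 / 2)"
    by simp
  moreover have "exp (k * ln r) = r ^ k"
    using r by (simp add: exp_of_nat_mult)
  ultimately show ?thesis
    using kn by (simp only: exp_add powr_def) simp
qed

lemma nn_integral_std_gaussian_norm_power_le:
  "(\<integral>\<^sup>+u. ennreal (norm u ^ k) \<partial>(std_gaussian :: 'a::euclidean_space measure))
     \<le> ennreal ((real k + real DIM('a)) powr (real k / 2))"
proof -
  define n where "n = real DIM('a)"
  define \<tau> where "\<tau> = k / (k + n)"
  define C where "C = (k + n) powr (k / 2) * exp (- k / 2)"
  have n: "n > 0" by (simp add: n_def)
  have \<tau>: "\<tau> < 1" "1 - \<tau> = n / (k + n)"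
    using n by (simp_all add: \<tau>_def field_simps)
  have "(1 - \<tau>) powr (- n / 2) = exp (n / 2 * ln (1 + k / n))"
    using n by (simp add: \<tau>(2) powr_def ln_div field_simps)
  also have "\<dots> \<le> exp (n / 2 * (k / n))"
    using n by (intro exp_mono mult_left_mono ln_add_one_self_le_self) simp_all
  finally have factor_le_one: "exp (- k / 2) * (1 - \<tau>) powr (- n / 2) \<le> 1"
    using n by (simp add: exp_minus field_simps)
  have "(\<integral>\<^sup>+u. ennreal (norm u ^ k) \<partial>(std_gaussian :: 'a measure))
      \<le> (\<integral>\<^sup>+u. ennreal C * ennreal (exp (\<tau> * (norm u)\<^sup>2 / 2)) \<partial>(std_gaussian :: 'a measure))"
    using power_le_exp_square[OF norm_ge_zero n]
    by (intro nn_integral_mono) (simp add: C_def \<tau>_def ennreal_mult''[symmetric] ennreal_leI)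
  also have "\<dots> = ennreal (C * (1 - \<tau>) powr (- n / 2))"
    using \<tau> by (simp add: nn_integral_cmult nn_integral_std_gaussian_exp_norm_sq n_def ennreal_mult'')
  also have "\<dots> \<le> ennreal ((k + n) powr (k / 2))"
    using factor_le_one by (intro ennreal_leI) (simp add: C_def mult.assoc mult_left_le)
  finally show ?thesis by (simp add: n_def)
qed

lemma integrable_std_gaussian_norm_power:
  "integrable (std_gaussian :: 'a::euclidean_space measure) (\<lambda>u. norm u ^ k)"
proof (rule integrableI_bounded)
  show "(\<integral>\<^sup>+u. ennreal (norm (norm u ^ k)) \<partial>(std_gaussian :: 'a measure)) < \<infinity>"
    using nn_integral_std_gaussian_norm_power_le[of k, where 'a='a]
    by (simp add: le_less_trans)
qed simp

lemma integral_std_gaussian_norm_power_le: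
  "(\<integral>u. norm u ^ k \<partial>(std_gaussian :: 'a::euclidean_space measure))
     \<le> (real k + real DIM('a)) powr (real k / 2)"
  using nn_integral_std_gaussian_norm_power_le[of k, where 'a='a]
  by (simp add: nn_integral_eq_integral integrable_std_gaussian_norm_power)

lemma integral_std_gaussian_norm_le:
  "(\<integral>u. norm u \<partial>(std_gaussian :: 'a::euclidean_space measure)) \<le> sqrt DIM('a)"
proof -
  interpret prob_space "std_gaussian :: 'a measure"
    by (rule prob_space_std_gaussian)
  have sq: "integrable std_gaussian (\<lambda>u::'a. (norm u)\<^sup>2)"
    using integrable_std_gaussian_norm_power[of 2] .
  have "expectation (\<lambda>u::'a. (norm u)\<^sup>2) = DIM('a)"
    using nn_integral_std_gaussian_norm_sq[where 'a='a] sq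
    by (simp add: nn_integral_eq_integral)
  moreover have "(expectation norm)\<^sup>2 \<le> expectation (\<lambda>u::'a. (norm u)\<^sup>2)"
    using variance_eq[OF integrable_std_gaussian_norm_power[of 1, simplified] sq]
      variance_positive[of norm] by linarith
  ultimately show ?thesis
    by (simp add: real_le_rsqrt)
qed

section \<open>Gaussian smoothing\<close>

lemma gauss_smooth_diff_bound:
  fixes f :: "'a::euclidean_space \<Rightarrow> real"
  assumes [measurable]: "f \<in> borel_measurable borel"
    and bound: "\<And>u. \<bar>f (x + \<sigma> *\<^sub>R u) - f x\<bar> \<le> a * norm u + b * norm u ^ k"
    and "a \<ge> 0" "b \<ge> 0"
  shows "\<bar>gauss_smooth f \<sigma> x - f x\<bar>
    \<le> a * sqrt DIM('a) + b * (real k + real DIM('a)) powr (real k / 2)"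
proof -
  interpret prob_space "std_gaussian :: 'a measure"
    by (rule prob_space_std_gaussian)
  define G where "G u = a * norm u + b * norm u ^ k" for u :: 'a
  have int_G: "integrable std_gaussian G"
    unfolding G_def using integrable_std_gaussian_norm_power[of 1] integrable_std_gaussian_norm_power[of k]
    by (intro Bochner_Integration.integrable_add integrable_mult_right) simp_all
  have int_diff: "integrable std_gaussian (\<lambda>u. f (x + \<sigma> *\<^sub>R u) - f x)"
    by (rule Bochner_Integration.integrable_bound[OF int_G])
      (auto simp: G_def intro!: AE_I2 order_trans[OF bound abs_ge_self])
  then have "integrable std_gaussian (\<lambda>u. f (x + \<sigma> *\<^sub>R u))"
    using Bochner_Integration.integrable_add[OF int_diff integrable_const[of "f x"]] by simp
  then have "gauss_smooth f \<sigma> x - f x = expectation (\<lambda>u. f (x + \<sigma> *\<^sub>R u) - f x)"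
    by (simp add: gauss_smooth_def prob_space)
  also have "\<bar>\<dots>\<bar> \<le> expectation G"
    using bound by (intro integral_abs_bound_integral int_diff int_G) (simp_all add: G_def)
  also have "\<dots> = a * expectation norm + b * expectation (\<lambda>u. norm u ^ k)"
    unfolding G_def using integrable_std_gaussian_norm_power[of 1] integrable_std_gaussian_norm_power[of k]
    by (subst Bochner_Integration.integral_add) (auto intro!: integrable_mult_right)
  also have "\<dots> \<le> a * sqrt DIM('a) + b * (real k + real DIM('a)) powr (real k / 2)"
    using assms(3,4) integral_std_gaussian_norm_le integral_std_gaussian_norm_power_le
    by (intro add_mono mult_left_mono) simp_all
  finally show ?thesis .
qed

theorem lemma4p2:
  fixes f :: "'a::euclidean_space \<Rightarrow> real" and R1 R2 \<sigma> :: real and m :: nat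
  assumes "SPB f R1 R2 m" and "\<sigma> > 0"
  shows "\<forall>x. \<bar>gauss_smooth f \<sigma> x - f x\<bar> \<le>
    ((2 powr (real m - 1) * R1 * norm x ^ m + R2) * sqrt (real DIM('a))
     + 2 powr (real m - 1) * R1 * \<sigma> ^ m * (real m + 1 + real DIM('a)) powr ((real m + 1) / 2)) * \<sigma>"
proof
  fix x :: 'a
  define c where "c = 2 powr (real m - 1)"
  have R: "R1 \<ge> 0" "R2 > 0" and "loc_lipschitz f"
    using assms(1) by (auto simp: SPB_def)
  then have "f \<in> borel_measurable borel"
    by (intro borel_measurable_continuous_onI loc_lipschitz_continuous_on)
  moreover have "\<bar>f (x + \<sigma> *\<^sub>R u) - f x\<bar>
      \<le> ((c * R1 * norm x ^ m + R2) * \<sigma>) * norm u + (c * R1 * \<sigma> ^ (m + 1)) * norm u ^ (m + 1)" for u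
    using SPB_increment_bound[OF assms(1), of x "\<sigma> *\<^sub>R u"] assms(2)
    by (simp add: c_def power_mult_distrib algebra_simps)
  ultimately have "\<bar>gauss_smooth f \<sigma> x - f x\<bar>
      \<le> ((c * R1 * norm x ^ m + R2) * \<sigma>) * sqrt DIM('a)
        + (c * R1 * \<sigma> ^ (m + 1)) * (real (m + 1) + real DIM('a)) powr (real (m + 1) / 2)"
    using R assms(2) by (intro gauss_smooth_diff_bound) (simp_all add: c_def)
  then show "\<bar>gauss_smooth f \<sigma> x - f x\<bar> \<le> ((c * R1 * norm x ^ m + R2) * sqrt (real DIM('a))
      + c * R1 * \<sigma> ^ m * (real m + 1 + real DIM('a)) powr ((real m + 1) / 2)) * \<sigma>"
    by (simp add: algebra_simps)
qed

end
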